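(* Let $\alpha>1$, $k\ge 2$ an integer, $f\in\mathcal{M}_{\alpha,k}$, let $\phi:\mathbb{N}\to\mathbb{C}$ be an arithmetic function such that the Dirichlet series $\Phi(s)=\sum_{n=1}^\infty \phi(n)n^{-s}$ converges absolutely in the half-plane $\operatorname{Re}(s)>1$. Then for every $1<\sigma<\alpha$, $\Phi(s)f^*(s)\in L_1(\sigma-i\infty,\sigma+i\infty)$ and for all $x>0$ $$\frac{1}{2\pi i}\int_{\sigma-i\infty}^{\sigma+i\infty}\Phi(s)f^*(s)x^{-s}\,ds=\sum_{n=1}^\infty\phi(n)f(nx);$$ moreover the Mellin transform of $x\mapsto\sum_{n=1}^\infty\phi(n)f(nx)$ exists in the strip $1<\operatorname{Re}(s)<\alpha$ and equals $\Phi(s)f^*(s)$ there.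
   Context: For $\alpha>1$ and $k\in\mathbb{N}_0$, the class $\mathcal{M}_{\alpha,k}$ consists of the functions $f$ defined on $[0,\infty)$ such that $f\in\mathcal{C}^{(k)}([0,\infty))$ and $f^{(j)}(x)=\mathcal{O}(x^{-\alpha-j})$ as $x\to\infty$, for all $j=0,1,\dots,k$. $f^*(s)=\int_0^\infty f(x)x^{s-1}dx$ denotes the Mellin transform of $f$. *)

theory Defs
  imports "HOL-Analysis.Analysis"
begin

definition class_M :: "real \<Rightarrow> nat \<Rightarrow> (real \<Rightarrow> complex) \<Rightarrow> bool" where
  "class_M \<alpha> k f \<longleftrightarrow>
     (\<exists>D :: nat \<Rightarrow> real \<Rightarrow> complex.
        (\<forall>x\<ge>0. D 0 x = f x) \<and>
        (\<forall>j<k. \<forall>x\<ge>0. (D j has_vector_derivative D (Suc j) x) (at x within {0..})) \<and>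
        (\<forall>j\<le>k. continuous_on {0..} (D j)) \<and>
        (\<forall>j\<le>k. \<exists>C X. \<forall>x\<ge>X. norm (D j x) \<le> C * x powr (- \<alpha> - real j)))"

definition mellin :: "(real \<Rightarrow> complex) \<Rightarrow> complex \<Rightarrow> complex" where
  "mellin f s = (LINT x:{0<..}|lborel. of_real x powr (s - 1) * f x)"

definition mellin_exists :: "(real \<Rightarrow> complex) \<Rightarrow> complex \<Rightarrow> bool" where
  "mellin_exists f s \<longleftrightarrow> set_integrable lborel {0<..} (\<lambda>x. of_real x powr (s - 1) * f x)"

definition dirichlet_series :: "(nat \<Rightarrow> complex) \<Rightarrow> complex \<Rightarrow> complex" where
  "dirichlet_series \<phi> s = (\<Sum>n. \<phi> (Suc n) / of_nat (Suc n) powr s)"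

end

theory Submission
  imports Defs "HOL-Probability.Probability"
begin

text \<open>
  Substituting \<open>x = e\<^sup>u\<close> turns the Mellin transform of \<open>f\<close> on the line \<open>Re s = \<sigma>\<close> into the
  Fourier transform of \<open>h(u) = e\<^bsup>\<sigma>u\<^esup> f(e\<^sup>u)\<close>, which decays exponentially for \<open>0 < \<sigma> < \<alpha>\<close>.
  The same holds for the pullbacks of \<open>f'\<close> and \<open>f''\<close>, and two integrations by parts give
  \<open>|f*(\<sigma> + it)| = O(1 / (1 + t\<^sup>2))\<close>. Fourier inversion, proved by Gaussian damping, then yields
  Mellin inversion for \<open>f\<close>. For \<open>\<sigma> > 1\<close> the Dirichlet series is bounded on the line by
  \<open>\<Sum> |\<phi>(n)| n\<^bsup>-\<sigma>\<^esup>\<close>, so \<open>\<Phi>(s) f*(s) x\<^bsup>-s\<^esup>\<close> may be integrated term by term, and Mellin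
  inversion at the points \<open>nx\<close> gives \<open>\<Sum> \<phi>(n) f(nx)\<close>. Conversely, the Mellin transform of
  \<open>\<Sum> \<phi>(n) f(nx)\<close> is computed term by term from the dilation rule \<open>(f(n\<cdot>))*(s) = n\<^bsup>-s\<^esup> f*(s)\<close>.
\<close>

section \<open>Fourier transform and Fourier inversion\<close>

definition fourier_transform :: "(real \<Rightarrow> complex) \<Rightarrow> real \<Rightarrow> complex" where
  "fourier_transform F t = (\<integral>u. F u * iexp (t * u) \<partial>lborel)"

lemma integrable_exp_neg_abs:
  fixes c :: real
  assumes "c > 0"
  shows "integrable lborel (\<lambda>x. exp (- c * \<bar>x\<bar>))"
proof -
  have pos: "integrable lborel (\<lambda>x. indicator {0<..} x *\<^sub>R exp (- (x * c)))"
    using integrable_I0i_exp_mscale[OF assms] unfolding set_integrable_def .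
  have neg: "integrable lborel (\<lambda>x. indicator {0<..} (0 + (- 1) * x) *\<^sub>R exp (- ((0 + (- 1) * x) * c)))"
    by (rule lborel_integrable_real_affine[OF pos]) simp
  have zero: "integrable lborel (indicat_real {0::real})"
    by (rule integrable_real_indicator) auto
  show ?thesis
    by (rule Bochner_Integration.integrable_cong[THEN iffD1, OF refl _
          Bochner_Integration.integrable_add[OF Bochner_Integration.integrable_add[OF pos neg] zero]])
      (auto simp: indicator_def mult.commute)
qed

lemma integrable_gaussian: "integrable lborel (\<lambda>w::real. exp (- w\<^sup>2 / 2))"
proof -
  have "integrable lborel (\<lambda>w. sqrt (2 * pi) * std_normal_density w)"
    using integrable_normal_density[of 0 1] by (intro Bochner_Integration.integrable_mult_right) auto
  then show ?thesis by (simp add: std_normal_density_def)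
qed

lemma integral_gaussian: "(\<integral>w. exp (- w\<^sup>2 / 2) \<partial>lborel) = sqrt (2 * pi)"
proof -
  have "(\<integral>w. std_normal_density w \<partial>lborel) = 1" by simp
  then have "(1 / sqrt (2 * pi)) * (\<integral>w. exp (- w\<^sup>2 / 2) \<partial>lborel) = 1"
    by (simp only: std_normal_density_def integral_mult_right_zero)
  then show ?thesis by (simp add: field_simps)
qed

lemma fourier_transform_gaussian:
  assumes e: "e > 0"
  shows "fourier_transform (\<lambda>t. of_real (exp (- (e * t)\<^sup>2 / 2))) v
       = of_real (sqrt (2 * pi) / e * exp (- (v / e)\<^sup>2 / 2))"
proof -
  have "(\<integral>w. std_normal_density w *\<^sub>R iexp (s * w) \<partial>lborel) = of_real (exp (- s\<^sup>2 / 2))" for s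
  proof -
    have "char std_normal_distribution s = (\<integral>w. std_normal_density w *\<^sub>R iexp (s * w) \<partial>lborel)"
      unfolding char_def by (subst integral_density) auto
    then show ?thesis by (simp add: char_std_normal_distribution)
  qed
  moreover have "std_normal_density w *\<^sub>R iexp (s * w)
      = of_real (1 / sqrt (2 * pi)) * (of_real (exp (- w\<^sup>2 / 2)) * iexp (s * w))" for s w
    by (simp add: std_normal_density_def scaleR_conv_of_real mult_ac)
  ultimately have scaled: "of_real (1 / sqrt (2 * pi)) * (\<integral>w. of_real (exp (- w\<^sup>2 / 2)) * iexp (s * w) \<partial>lborel)
      = of_real (exp (- s\<^sup>2 / 2))" for s
    by (simp only: integral_mult_right_zero)
  have std: "(\<integral>w. of_real (exp (- w\<^sup>2 / 2)) * iexp (s * w) \<partial>lborel)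
      = of_real (sqrt (2 * pi) * exp (- s\<^sup>2 / 2))" for s
    using scaled[of s] by (simp add: field_simps)
  have "fourier_transform (\<lambda>t. of_real (exp (- (e * t)\<^sup>2 / 2))) v
      = \<bar>1 / e\<bar> *\<^sub>R (\<integral>w. of_real (exp (- (e * (0 + 1 / e * w))\<^sup>2 / 2)) * iexp (v * (0 + 1 / e * w)) \<partial>lborel)"
    unfolding fourier_transform_def by (rule lborel_integral_real_affine) (use e in simp)
  also have "\<dots> = (1 / e) *\<^sub>R (\<integral>w. of_real (exp (- w\<^sup>2 / 2)) * iexp (v / e * w) \<partial>lborel)"
    using e by (simp add: field_simps)
  also have "\<dots> = (1 / e) *\<^sub>R of_real (sqrt (2 * pi) * exp (- (v / e)\<^sup>2 / 2))"
    by (simp only: std)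
  finally show ?thesis
    by (simp add: scaleR_conv_of_real)
qed

lemma integrable_mult_iexp:
  assumes "integrable lborel F"
  shows "integrable lborel (\<lambda>u. F u * iexp (t * u))"
proof (rule Bochner_Integration.integrable_bound[OF assms])
  have [measurable]: "F \<in> borel_measurable borel" using assms by auto
  show "(\<lambda>u. F u * iexp (t * u)) \<in> borel_measurable lborel" by measurable
  show "AE u in lborel. norm (F u * iexp (t * u)) \<le> norm (F u)"
    by (simp add: norm_mult)
qed

lemma fourier_transform_deriv:
  fixes F F' :: "real \<Rightarrow> complex"
  assumes der: "\<And>u. (F has_vector_derivative F' u) (at u)"
    and cont': "continuous_on UNIV F'"
    and int: "integrable lborel F" and int': "integrable lborel F'"
    and top: "(F \<longlongrightarrow> 0) at_top" and bot: "(F \<longlongrightarrow> 0) at_bot"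
  shows "fourier_transform F' t = - (\<i> * t) * fourier_transform F t"
proof -
  define P where "P u = F u * iexp (t * u)" for u
  define Q where "Q u = F' u * iexp (t * u) + (\<i> * t) * (F u * iexp (t * u))" for u
  have iexp_der: "((\<lambda>u. iexp (t * u)) has_vector_derivative (\<i> * t * iexp (t * u))) (at u)" for u
  proof -
    have "((\<lambda>z. exp (\<i> * t * z)) has_field_derivative (\<i> * t * exp (\<i> * t * u))) (at (of_real u))"
      by (auto intro!: derivative_eq_intros)
    from has_vector_derivative_real_field[OF this] show ?thesis by (simp add: mult_ac)
  qed
  have dP: "(P has_vector_derivative Q u) (at u)" for u
    using has_vector_derivative_mult[OF der[of u] iexp_der[of u]]
    unfolding P_def[abs_def] Q_def by (simp add: mult_ac add.commute)
  have cont: "continuous_on UNIV F"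
    using der by (meson continuous_at_imp_continuous_on has_vector_derivative_continuous)
  have intQ: "integrable lborel Q"
    unfolding Q_def
    by (intro Bochner_Integration.integrable_add Bochner_Integration.integrable_mult_right
          integrable_mult_iexp int int')
  have P_lim: "(P \<longlongrightarrow> 0) L" if "(F \<longlongrightarrow> 0) L" for L
    by (rule tendsto_norm_zero_cancel)
      (use tendsto_norm_zero[OF that] in \<open>simp add: P_def norm_mult\<close>)
  have "(LBINT u=-\<infinity>..\<infinity>. Q u) = 0 - 0"
  proof (rule interval_integral_FTC_integrable)
    show "isCont Q u" for u
      using cont cont' unfolding Q_def[abs_def] continuous_on_eq_continuous_at[OF open_UNIV]
      by (intro continuous_intros) auto
    show "set_integrable lborel (einterval (- \<infinity>) \<infinity>) Q"
      using intQ by (simp add: set_integrable_def)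
    show "((P \<circ> real_of_ereal) \<longlongrightarrow> 0) (at_right (- \<infinity>))"
      using P_lim[OF bot] by (simp add: ereal_tendsto_simps)
    show "((P \<circ> real_of_ereal) \<longlongrightarrow> 0) (at_left \<infinity>)"
      using P_lim[OF top] by (simp add: ereal_tendsto_simps)
  qed (use dP in auto)
  then have "(\<integral>u. Q u \<partial>lborel) = 0"
    by (simp add: interval_lebesgue_integral_def set_lebesgue_integral_def)
  moreover have "(\<integral>u. Q u \<partial>lborel) = fourier_transform F' t + (\<i> * t) * fourier_transform F t"
    unfolding Q_def fourier_transform_def
    by (simp only: Bochner_Integration.integral_add[OF integrable_mult_iexp[OF int']
          Bochner_Integration.integrable_mult_right[OF integrable_mult_iexp[OF int]]]
        integral_mult_right_zero)
  ultimately show ?thesis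
    by (simp add: eq_neg_iff_add_eq_0 add.commute)
qed

lemma integrable_gaussian_damped_kernel:
  fixes g :: "real \<Rightarrow> complex"
  assumes int: "integrable lborel g" and e: "e \<noteq> 0"
  shows "integrable (lborel \<Otimes>\<^sub>M lborel)
           (\<lambda>(u, t). g u * (of_real (exp (- (e * t)\<^sup>2 / 2)) * iexp ((u - u0) * t)))"
proof (rule lborel_pair.Fubini_integrable)
  have [measurable]: "g \<in> borel_measurable borel"
    using int by auto
  show "(\<lambda>(u, t). g u * (of_real (exp (- (e * t)\<^sup>2 / 2)) * iexp ((u - u0) * t)))
      \<in> borel_measurable (lborel \<Otimes>\<^sub>M lborel)"
    by measurable
  show "integrable lborel (\<lambda>u. \<integral>t. norm (case_prod
      (\<lambda>u t. g u * (of_real (exp (- (e * t)\<^sup>2 / 2)) * iexp ((u - u0) * t))) (u, t)) \<partial>lborel)"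
    using int by (simp add: norm_mult integrable_norm)
  show "AE u in lborel. integrable lborel (\<lambda>t. case_prod
      (\<lambda>u t. g u * (of_real (exp (- (e * t)\<^sup>2 / 2)) * iexp ((u - u0) * t))) (u, t))"
  proof (rule AE_I2)
    fix u
    have "integrable lborel (\<lambda>t. exp (- (e * t)\<^sup>2 / 2))"
      using lborel_integrable_real_affine[OF integrable_gaussian e, of 0] by simp
    then have "integrable lborel (\<lambda>t. of_real (exp (- (e * t)\<^sup>2 / 2)) * iexp ((u - u0) * t))"
      by (rule Bochner_Integration.integrable_bound) (auto simp: norm_mult)
    then show "integrable lborel (\<lambda>t. case_prod
        (\<lambda>u t. g u * (of_real (exp (- (e * t)\<^sup>2 / 2)) * iexp ((u - u0) * t))) (u, t))"
      unfolding split by (rule Bochner_Integration.integrable_mult_right)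
  qed
qed

lemma integral_fourier_transform_gaussian_damped:
  fixes g :: "real \<Rightarrow> complex"
  assumes int: "integrable lborel g" and e: "e > 0"
  shows "(\<integral>t. fourier_transform g t * iexp (- (t * u0)) * of_real (exp (- (e * t)\<^sup>2 / 2)) \<partial>lborel)
       = sqrt (2 * pi) * (\<integral>w. of_real (exp (- w\<^sup>2 / 2)) * g (u0 + e * w) \<partial>lborel)"
proof -
  define E :: "real \<Rightarrow> complex" where "E t = of_real (exp (- (e * t)\<^sup>2 / 2))" for t
  define K where "K u t = g u * (E t * iexp ((u - u0) * t))" for u t
  have inner: "fourier_transform g t * iexp (- (t * u0)) * E t = (\<integral>u. K u t \<partial>lborel)" for t
  proof -
    have "fourier_transform g t * iexp (- (t * u0)) * E t
        = (\<integral>u. g u * iexp (t * u) * (iexp (- (t * u0)) * E t) \<partial>lborel)"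
      unfolding fourier_transform_def by (simp only: mult.assoc[of _ "iexp (- (t * u0))"] integral_mult_left_zero)
    also have "\<dots> = (\<integral>u. K u t \<partial>lborel)"
    proof (rule Bochner_Integration.integral_cong[OF refl])
      fix u
      have "iexp (t * u) * iexp (- (t * u0)) = iexp ((u - u0) * t)"
        by (simp add: exp_add[symmetric] algebra_simps)
      then show "g u * iexp (t * u) * (iexp (- (t * u0)) * E t) = K u t"
        unfolding K_def by (simp add: mult_ac)
    qed
    finally show ?thesis .
  qed
  have int_K: "integrable (lborel \<Otimes>\<^sub>M lborel) (case_prod K)"
    using integrable_gaussian_damped_kernel[OF int, of e u0] e unfolding K_def E_def by simp
  have "(\<integral>t. fourier_transform g t * iexp (- (t * u0)) * E t \<partial>lborel) = (\<integral>t. \<integral>u. K u t \<partial>lborel \<partial>lborel)"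
    by (simp only: inner)
  also have "\<dots> = (\<integral>u. \<integral>t. K u t \<partial>lborel \<partial>lborel)"
    by (rule lborel_pair.Fubini_integral[OF int_K])
  also have "\<dots> = (\<integral>u. g u * fourier_transform E (u - u0) \<partial>lborel)"
    unfolding K_def fourier_transform_def integral_mult_right_zero ..
  also have "\<dots> = (\<integral>u. g u * of_real (sqrt (2 * pi) / e * exp (- ((u - u0) / e)\<^sup>2 / 2)) \<partial>lborel)"
    unfolding E_def fourier_transform_gaussian[OF e] ..
  also have "\<dots> = \<bar>e\<bar> *\<^sub>R (\<integral>w. g (u0 + e * w) * of_real (sqrt (2 * pi) / e * exp (- ((u0 + e * w - u0) / e)\<^sup>2 / 2)) \<partial>lborel)"
    by (rule lborel_integral_real_affine) (use e in simp)
  also have "(\<lambda>w. g (u0 + e * w) * of_real (sqrt (2 * pi) / e * exp (- ((u0 + e * w - u0) / e)\<^sup>2 / 2)))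
      = (\<lambda>w. of_real (1 / e) * (sqrt (2 * pi) * (of_real (exp (- w\<^sup>2 / 2)) * g (u0 + e * w))))"
    using e by (simp add: mult_ac)
  also have "\<bar>e\<bar> *\<^sub>R (\<integral>w. of_real (1 / e) * (sqrt (2 * pi) * (of_real (exp (- w\<^sup>2 / 2)) * g (u0 + e * w))) \<partial>lborel)
      = sqrt (2 * pi) * (\<integral>w. of_real (exp (- w\<^sup>2 / 2)) * g (u0 + e * w) \<partial>lborel)"
    using e by (simp add: integral_mult_right_zero scaleR_conv_of_real)
  finally show ?thesis by (simp add: E_def)
qed

lemma gaussian_mollifier_tendsto:
  fixes g :: "real \<Rightarrow> complex"
  assumes [measurable]: "g \<in> borel_measurable borel"
    and bnd: "\<And>u. norm (g u) \<le> B" and cont: "isCont g u0" and e: "e \<longlonglongrightarrow> 0"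
  shows "(\<lambda>n. \<integral>w. of_real (exp (- w\<^sup>2 / 2)) * g (u0 + e n * w) \<partial>lborel) \<longlonglongrightarrow> sqrt (2 * pi) * g u0"
proof -
  have "(\<lambda>n. \<integral>w. of_real (exp (- w\<^sup>2 / 2)) * g (u0 + e n * w) \<partial>lborel)
      \<longlonglongrightarrow> (\<integral>w. of_real (exp (- w\<^sup>2 / 2)) * g u0 \<partial>lborel)"
  proof (rule integral_dominated_convergence[where w="\<lambda>w. B * exp (- w\<^sup>2 / 2)"])
    show "integrable lborel (\<lambda>w. B * exp (- w\<^sup>2 / 2))"
      using integrable_gaussian by (rule Bochner_Integration.integrable_mult_right)
    show "AE w in lborel. (\<lambda>n. of_real (exp (- w\<^sup>2 / 2)) * g (u0 + e n * w)) \<longlonglongrightarrow> of_real (exp (- w\<^sup>2 / 2)) * g u0"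
    proof (rule AE_I2)
      fix w
      have "(\<lambda>n. u0 + e n * w) \<longlonglongrightarrow> u0 + 0 * w"
        by (intro tendsto_intros e)
      then show "(\<lambda>n. of_real (exp (- w\<^sup>2 / 2)) * g (u0 + e n * w)) \<longlonglongrightarrow> of_real (exp (- w\<^sup>2 / 2)) * g u0"
        by (intro tendsto_intros isCont_tendsto_compose[OF cont]) simp
    qed
    show "AE w in lborel. norm (of_real (exp (- w\<^sup>2 / 2)) * g (u0 + e n * w)) \<le> B * exp (- w\<^sup>2 / 2)" for n
      by (intro AE_I2) (simp add: norm_mult bnd mult.commute mult_right_mono)
  qed auto
  also have "(\<integral>w. of_real (exp (- w\<^sup>2 / 2)) * g u0 \<partial>lborel) = sqrt (2 * pi) * g u0"
    using integral_gaussian by (simp add: integral_mult_left_zero flip: integral_of_real)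
  finally show ?thesis .
qed

theorem fourier_inversion:
  fixes g :: "real \<Rightarrow> complex"
  assumes int: "integrable lborel g" and bnd: "\<And>u. norm (g u) \<le> B"
    and cont: "isCont g u0" and int_ft: "integrable lborel (fourier_transform g)"
  shows "(\<integral>t. fourier_transform g t * iexp (- (t * u0)) \<partial>lborel) = 2 * pi * g u0"
proof -
  have [measurable]: "g \<in> borel_measurable borel" "fourier_transform g \<in> borel_measurable borel"
    using int int_ft by auto
  \<comment> \<open>Damp by \<open>exp (- (e t)\<^sup>2 / 2)\<close> and let \<open>e \<rightarrow> 0\<close> on both sides of the damped identity.\<close>
  define e where "e n = inverse (real (Suc n))" for n
  have e_pos: "e n > 0" for n
    unfolding e_def by simp
  have e_lim: "e \<longlonglongrightarrow> 0"
    unfolding e_def by (rule LIMSEQ_inverse_real_of_nat)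
  have lhs: "(\<lambda>n. \<integral>t. fourier_transform g t * iexp (- (t * u0)) * of_real (exp (- (e n * t)\<^sup>2 / 2)) \<partial>lborel)
      \<longlonglongrightarrow> (\<integral>t. fourier_transform g t * iexp (- (t * u0)) \<partial>lborel)"
  proof (rule integral_dominated_convergence[where w="\<lambda>t. norm (fourier_transform g t)"])
    show "AE t in lborel. (\<lambda>n. fourier_transform g t * iexp (- (t * u0)) * of_real (exp (- (e n * t)\<^sup>2 / 2)))
        \<longlonglongrightarrow> fourier_transform g t * iexp (- (t * u0))"
    proof (rule AE_I2)
      fix t
      have "(\<lambda>n. of_real (exp (- (e n * t)\<^sup>2 / 2)) :: complex) \<longlonglongrightarrow> of_real (exp (- (0 * t)\<^sup>2 / 2))"
        by (intro tendsto_intros e_lim) simp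
      then show "(\<lambda>n. fourier_transform g t * iexp (- (t * u0)) * of_real (exp (- (e n * t)\<^sup>2 / 2)))
          \<longlonglongrightarrow> fourier_transform g t * iexp (- (t * u0))"
        using tendsto_mult_left by fastforce
    qed
    show "AE t in lborel. norm (fourier_transform g t * iexp (- (t * u0)) * of_real (exp (- (e n * t)\<^sup>2 / 2)))
        \<le> norm (fourier_transform g t)" for n
      by (intro AE_I2) (simp add: norm_mult mult_left_le)
  qed (use int_ft in auto)
  have "(\<lambda>n. \<integral>t. fourier_transform g t * iexp (- (t * u0)) * of_real (exp (- (e n * t)\<^sup>2 / 2)) \<partial>lborel)
      \<longlonglongrightarrow> sqrt (2 * pi) * (sqrt (2 * pi) * g u0)"
    unfolding integral_fourier_transform_gaussian_damped[OF int e_pos]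
    by (intro tendsto_intros gaussian_mollifier_tendsto[OF _ bnd cont e_lim]) measurable
  with lhs have "(\<integral>t. fourier_transform g t * iexp (- (t * u0)) \<partial>lborel) = sqrt (2 * pi) * (sqrt (2 * pi) * g u0)"
    by (rule LIMSEQ_unique)
  then show ?thesis
    by (simp flip: of_real_mult add: mult.assoc[symmetric])
qed

section \<open>The exponential substitution\<close>

definition exp_pullback :: "real \<Rightarrow> (real \<Rightarrow> complex) \<Rightarrow> real \<Rightarrow> complex" where
  "exp_pullback \<sigma> g u = of_real (exp (\<sigma> * u)) * g (exp u)"

lemma continuous_on_exp_pullback:
  assumes "continuous_on {0<..} g"
  shows "continuous_on UNIV (exp_pullback \<sigma> g)"
proof -
  have "isCont g (exp u)" for u
    using assms by (simp add: continuous_on_eq_continuous_at)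
  then show ?thesis
    unfolding exp_pullback_def
    by (intro continuous_at_imp_continuous_on ballI continuous_intros
          continuous_at_compose[of _ exp g, unfolded o_def])
qed

lemma exp_le_powr_mult_exp_neg_abs:
  fixes c \<sigma> X u :: real
  assumes "0 < c" "c \<le> \<sigma>" "1 \<le> X" "exp u \<le> X"
  shows "exp (\<sigma> * u) \<le> X powr (\<sigma> + c) * exp (- c * \<bar>u\<bar>)"
proof (cases "u \<le> 0")
  case True
  have "exp (\<sigma> * u) \<le> exp (- c * \<bar>u\<bar>)"
    using True assms by (simp add: mult_right_mono_neg)
  also have "\<dots> \<le> X powr (\<sigma> + c) * exp (- c * \<bar>u\<bar>)"
    using mult_right_mono[OF ge_one_powr_ge_zero[of X "\<sigma> + c"], of "exp (- c * \<bar>u\<bar>)"] assms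
    by simp
  finally show ?thesis .
next
  case False
  have "exp (\<sigma> * u) * exp (c * u) = exp u powr (\<sigma> + c)"
    by (simp add: powr_def exp_add[symmetric] algebra_simps)
  also have "\<dots> \<le> X powr (\<sigma> + c)"
    using assms by (intro powr_mono2) auto
  finally have "exp (\<sigma> * u) * exp (c * u) * exp (- c * \<bar>u\<bar>) \<le> X powr (\<sigma> + c) * exp (- c * \<bar>u\<bar>)"
    by (rule mult_right_mono) simp
  then show ?thesis
    using False by (simp add: mult.assoc exp_add[symmetric])
qed

lemma exp_pullback_exp_decay:
  assumes cont: "continuous_on {0..} g" and decay: "(\<lambda>x. norm (g x)) \<in> O(\<lambda>x. x powr - \<beta>)"
    and \<sigma>: "0 < \<sigma>" "\<sigma> < \<beta>"
  obtains K where "\<And>u. norm (exp_pullback \<sigma> g u) \<le> K * exp (- min \<sigma> (\<beta> - \<sigma>) * \<bar>u\<bar>)"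
proof -
  define c where "c = min \<sigma> (\<beta> - \<sigma>)"
  have c: "0 < c" "c \<le> \<sigma>" "c \<le> \<beta> - \<sigma>"
    using \<sigma> by (auto simp: c_def)
  obtain C where "C > 0" and "eventually (\<lambda>x. norm (g x) \<le> C * x powr - \<beta>) at_top"
    using decay by (elim landau_o.bigE) simp
  then obtain X0 where tail: "\<And>x. x \<ge> X0 \<Longrightarrow> norm (g x) \<le> C * x powr - \<beta>"
    by (auto simp: eventually_at_top_linorder)
  define X where "X = max X0 1"
  have X: "X \<ge> 1" "X \<ge> X0"
    by (auto simp: X_def)
  have "bounded (g ` {0..X})"
    by (intro compact_imp_bounded compact_continuous_image continuous_on_subset[OF cont]) auto
  then obtain B where B: "B > 0" "\<And>x. x \<in> {0..X} \<Longrightarrow> norm (g x) \<le> B"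
    by (auto simp: bounded_pos)
  have "norm (exp_pullback \<sigma> g u) \<le> (B * X powr (\<sigma> + c) + C) * exp (- c * \<bar>u\<bar>)" for u
  proof (cases "exp u \<le> X")
    case True
    have "norm (exp_pullback \<sigma> g u) \<le> B * (X powr (\<sigma> + c) * exp (- c * \<bar>u\<bar>))"
      unfolding exp_pullback_def norm_mult norm_of_real abs_exp_cancel mult.commute[of "exp (\<sigma> * u)"]
      using B True exp_le_powr_mult_exp_neg_abs[OF c(1,2) X(1) True]
      by (intro mult_mono) (auto simp: less_imp_le)
    also have "\<dots> \<le> (B * X powr (\<sigma> + c) + C) * exp (- c * \<bar>u\<bar>)"
      using \<open>C > 0\<close> by (simp add: distrib_right mult.assoc)
    finally show ?thesis .
  next
    case False
    then have u: "u \<ge> 0"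
      using X(1) by (metis exp_le_cancel_iff exp_zero linorder_not_le order.trans less_imp_le)
    have "norm (exp_pullback \<sigma> g u) \<le> C * exp u powr - \<beta> * exp (\<sigma> * u)"
      unfolding exp_pullback_def norm_mult norm_of_real abs_exp_cancel mult.commute[of "exp (\<sigma> * u)"]
      using tail[of "exp u"] False X(2) by (intro mult_right_mono) auto
    also have "\<dots> = C * exp ((\<sigma> - \<beta>) * u)"
      by (simp add: powr_def exp_add[symmetric] algebra_simps)
    also have "\<dots> \<le> C * exp (- c * \<bar>u\<bar>)"
      using c u \<open>C > 0\<close> mult_right_mono[of "\<sigma> - \<beta>" "- c" u] by simp
    also have "\<dots> \<le> (B * X powr (\<sigma> + c) + C) * exp (- c * \<bar>u\<bar>)"
      using B by (intro mult_right_mono) auto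
    finally show ?thesis .
  qed
  then show ?thesis
    using that unfolding c_def by blast
qed

lemma exp_decay_integrable:
  fixes F :: "real \<Rightarrow> 'a::{banach, second_countable_topology}"
  assumes "continuous_on UNIV F" "c > 0" "\<And>u. norm (F u) \<le> K * exp (- c * \<bar>u\<bar>)"
  shows "integrable lborel F"
proof (rule Bochner_Integration.integrable_bound)
  show "integrable lborel (\<lambda>u. K * exp (- c * \<bar>u\<bar>))"
    using assms(2) by (intro Bochner_Integration.integrable_mult_right integrable_exp_neg_abs)
  show "F \<in> borel_measurable lborel"
    using assms(1) by (simp add: borel_measurable_continuous_onI)
  show "AE u in lborel. norm (F u) \<le> norm (K * exp (- c * \<bar>u\<bar>))"
    using assms(3) by (intro AE_I2) (metis abs_ge_self order_trans real_norm_def)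
qed

lemma exp_decay_tendsto_zero:
  fixes F :: "real \<Rightarrow> 'a::real_normed_vector"
  assumes "c > 0" "\<And>u. norm (F u) \<le> K * exp (- c * \<bar>u\<bar>)"
  shows "(F \<longlongrightarrow> 0) at_infinity"
proof (rule Lim_null_comparison)
  show "\<forall>\<^sub>F u in at_infinity. norm (F u) \<le> K * exp (- c * \<bar>u\<bar>)"
    using assms(2) by simp
  have "filterlim (\<lambda>u::real. - c * \<bar>u\<bar>) at_bot at_infinity"
  proof (intro filterlim_tendsto_neg_mult_at_bot[OF tendsto_const])
    show "filterlim (\<lambda>u::real. \<bar>u\<bar>) at_top at_infinity"
      using filterlim_at_infinity_imp_norm_at_top[OF filterlim_ident]
      by (simp add: fun_eq_iff flip: real_norm_def)
  qed (use assms(1) in simp)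
  then show "((\<lambda>u. K * exp (- c * \<bar>u\<bar>)) \<longlongrightarrow> 0) at_infinity"
    by (intro tendsto_mult_right_zero filterlim_compose[OF exp_at_bot])
qed

lemma
  assumes cont: "continuous_on {0..} g" and decay: "(\<lambda>x. norm (g x)) \<in> O(\<lambda>x. x powr - \<beta>)"
    and \<sigma>: "0 < \<sigma>" "\<sigma> < \<beta>"
  shows integrable_exp_pullback: "integrable lborel (exp_pullback \<sigma> g)"
    and exp_pullback_tendsto_zero: "(exp_pullback \<sigma> g \<longlongrightarrow> 0) at_infinity"
    and exp_pullback_bounded: "\<exists>B. \<forall>u. norm (exp_pullback \<sigma> g u) \<le> B"
proof -
  obtain K where K: "\<And>u. norm (exp_pullback \<sigma> g u) \<le> K * exp (- min \<sigma> (\<beta> - \<sigma>) * \<bar>u\<bar>)"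
    using exp_pullback_exp_decay[OF cont decay \<sigma>] by blast
  have c: "min \<sigma> (\<beta> - \<sigma>) > 0"
    using \<sigma> by simp
  have "continuous_on UNIV (exp_pullback \<sigma> g)"
    using cont by (intro continuous_on_exp_pullback continuous_on_subset[OF cont]) auto
  then show "integrable lborel (exp_pullback \<sigma> g)"
    by (rule exp_decay_integrable[OF _ c K])
  show "(exp_pullback \<sigma> g \<longlongrightarrow> 0) at_infinity"
    by (rule exp_decay_tendsto_zero[OF c K])
  have "K * exp (- min \<sigma> (\<beta> - \<sigma>) * \<bar>u\<bar>) \<le> K" for u
    using order_trans[OF norm_ge_zero K[of 0]] c by (intro mult_left_le) auto
  then show "\<exists>B. \<forall>u. norm (exp_pullback \<sigma> g u) \<le> B"
    using K order_trans by blast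
qed

lemma exp_pullback_has_vector_derivative:
  assumes "(g has_vector_derivative g' (exp u)) (at (exp u))"
  shows "(exp_pullback \<sigma> g has_vector_derivative
           exp_pullback (\<sigma> + 1) g' u + of_real \<sigma> * exp_pullback \<sigma> g u) (at u)"
proof -
  have exp_shift: "exp ((\<sigma> + 1) * u) = exp (\<sigma> * u) * exp u"
    by (simp add: exp_add[symmetric] algebra_simps)
  have "((\<lambda>u. g (exp u)) has_vector_derivative exp u *\<^sub>R g' (exp u)) (at u)"
    using vector_diff_chain_at[OF DERIV_exp[of u, unfolded has_real_derivative_iff_has_vector_derivative] assms]
    by (simp add: o_def)
  moreover have "((\<lambda>u. of_real (exp (\<sigma> * u)) :: complex) has_vector_derivative
      of_real (\<sigma> * exp (\<sigma> * u))) (at u)"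
    by (intro has_vector_derivative_of_real) (auto intro!: derivative_eq_intros)
  ultimately have "(exp_pullback \<sigma> g has_vector_derivative
      of_real (exp (\<sigma> * u)) * (exp u *\<^sub>R g' (exp u)) + of_real (\<sigma> * exp (\<sigma> * u)) * g (exp u)) (at u)"
    unfolding exp_pullback_def[abs_def] by (rule has_vector_derivative_mult[rotated])
  moreover have "of_real (exp (\<sigma> * u)) * (exp u *\<^sub>R g' (exp u)) + of_real (\<sigma> * exp (\<sigma> * u)) * g (exp u)
      = exp_pullback (\<sigma> + 1) g' u + of_real \<sigma> * exp_pullback \<sigma> g u"
    unfolding exp_pullback_def scaleR_conv_of_real
    by (simp only: exp_shift of_real_mult) (simp add: algebra_simps)
  ultimately show ?thesis by simp
qed

lemma fourier_transform_exp_pullback_deriv: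
  assumes der: "\<And>x. x > 0 \<Longrightarrow> (g has_vector_derivative g' x) (at x)"
    and cont: "continuous_on {0..} g" and cont': "continuous_on {0..} g'"
    and decay: "(\<lambda>x. norm (g x)) \<in> O(\<lambda>x. x powr - \<beta>)"
    and decay': "(\<lambda>x. norm (g' x)) \<in> O(\<lambda>x. x powr (- \<beta> - 1))"
    and \<sigma>: "0 < \<sigma>" "\<sigma> < \<beta>"
  shows "fourier_transform (exp_pullback (\<sigma> + 1) g') t = - Complex \<sigma> t * fourier_transform (exp_pullback \<sigma> g) t"
proof -
  have \<sigma>': "0 < \<sigma> + 1" "\<sigma> + 1 < \<beta> + 1"
    using \<sigma> by auto
  have decay'': "(\<lambda>x. norm (g' x)) \<in> O(\<lambda>x. x powr - (\<beta> + 1))"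
    using decay' by (simp only: minus_add_distrib diff_conv_add_uminus)
  note int = integrable_exp_pullback[OF cont decay \<sigma>]
  note int' = integrable_exp_pullback[OF cont' decay'' \<sigma>']
  have "fourier_transform (\<lambda>u. exp_pullback (\<sigma> + 1) g' u + of_real \<sigma> * exp_pullback \<sigma> g u) t
      = - (\<i> * t) * fourier_transform (exp_pullback \<sigma> g) t"
  proof (rule fourier_transform_deriv)
    show "(exp_pullback \<sigma> g has_vector_derivative
        exp_pullback (\<sigma> + 1) g' u + of_real \<sigma> * exp_pullback \<sigma> g u) (at u)" for u
      by (intro exp_pullback_has_vector_derivative der) simp
    show "continuous_on UNIV (\<lambda>u. exp_pullback (\<sigma> + 1) g' u + of_real \<sigma> * exp_pullback \<sigma> g u)"
      by (intro continuous_intros continuous_on_exp_pullback continuous_on_subset[OF cont]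
          continuous_on_subset[OF cont']) auto
    show "integrable lborel (\<lambda>u. exp_pullback (\<sigma> + 1) g' u + of_real \<sigma> * exp_pullback \<sigma> g u)"
      by (intro Bochner_Integration.integrable_add Bochner_Integration.integrable_mult_right int int')
    have "(exp_pullback \<sigma> g \<longlongrightarrow> 0) at_infinity"
      by (rule exp_pullback_tendsto_zero[OF cont decay \<sigma>])
    then show "(exp_pullback \<sigma> g \<longlongrightarrow> 0) at_top" "(exp_pullback \<sigma> g \<longlongrightarrow> 0) at_bot"
      by (auto intro: tendsto_mono at_top_le_at_infinity at_bot_le_at_infinity)
  qed (rule int)
  moreover have "fourier_transform (\<lambda>u. exp_pullback (\<sigma> + 1) g' u + of_real \<sigma> * exp_pullback \<sigma> g u) t
      = fourier_transform (exp_pullback (\<sigma> + 1) g') t + of_real \<sigma> * fourier_transform (exp_pullback \<sigma> g) t"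
    unfolding fourier_transform_def distrib_right mult.assoc
    by (simp only: Bochner_Integration.integral_add[OF integrable_mult_iexp[OF int']
          Bochner_Integration.integrable_mult_right[OF integrable_mult_iexp[OF int]]]
        integral_mult_right_zero)
  ultimately have "fourier_transform (exp_pullback (\<sigma> + 1) g') t
      = - (of_real \<sigma> + \<i> * t) * fourier_transform (exp_pullback \<sigma> g) t"
    by algebra
  also have "of_real \<sigma> + \<i> * t = Complex \<sigma> t"
    by (simp add: complex_eq_iff)
  finally show ?thesis .
qed

lemma scaleR_exp_mellin_integrand:
  "exp u *\<^sub>R (of_real (exp u) powr (s - 1) * f (exp u)) = exp_pullback (Re s) f u * iexp (Im s * u)"
proof -
  have "of_real (exp u) powr (s - 1) = exp ((s - 1) * of_real u)"
    by (simp add: powr_def Ln_of_real)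
  then have "exp u *\<^sub>R (of_real (exp u) powr (s - 1) * f (exp u)) = exp (of_real u + (s - 1) * of_real u) * f (exp u)"
    unfolding scaleR_conv_of_real exp_add by (simp add: exp_of_real)
  also have "of_real u + (s - 1) * of_real u = of_real (Re s * u) + \<i> * of_real (Im s * u)"
    by (simp add: complex_eq_iff algebra_simps)
  finally show ?thesis
    by (simp only: exp_add exp_of_real exp_pullback_def mult_ac)
qed

lemma ereal_exp_tendsto:
  shows "((ereal \<circ> exp \<circ> real_of_ereal) \<longlongrightarrow> ereal 0) (at_right (-\<infinity>))"
    and "((ereal \<circ> exp \<circ> real_of_ereal) \<longlongrightarrow> \<infinity>) (at_left \<infinity>)"
proof -
  show "((ereal \<circ> exp \<circ> real_of_ereal) \<longlongrightarrow> ereal 0) (at_right (-\<infinity>))"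
    by (auto simp: ereal_tendsto_simps exp_at_bot o_assoc[symmetric])
  have "LIM x at_left \<infinity>. exp (real_of_ereal x) :> at_top"
    unfolding at_left_PInf filterlim_filtermap by (simp add: exp_at_top)
  then show "((ereal \<circ> exp \<circ> real_of_ereal) \<longlongrightarrow> \<infinity>) (at_left \<infinity>)"
    by (simp add: ereal_tendsto_simps2(2)[unfolded o_def] o_def)
qed

lemma mellin_eq_fourier_transform:
  assumes cont: "continuous_on {0<..} f" and int: "integrable lborel (exp_pullback (Re s) f)"
  shows "mellin_exists f s" "mellin f s = fourier_transform (exp_pullback (Re s) f) (Im s)"
proof -
  define F where "F x = of_real x powr (s - 1) * f x" for x
  have subst: "exp u *\<^sub>R F (exp u) = exp_pullback (Re s) f u * iexp (Im s * u)" for u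
    unfolding F_def by (rule scaleR_exp_mellin_integrand)
  have F_cont: "isCont F x" if "x > 0" for x
    using cont that unfolding F_def
    by (intro continuous_intros) (auto simp: continuous_on_eq_continuous_at complex_nonpos_Reals_iff)
  have int_norm: "set_integrable lborel (einterval 0 \<infinity>) (\<lambda>x. norm (F x))"
  proof (rule interval_integral_substitution_nonneg(1)[where g=exp and g'=exp and a="-\<infinity>" and b="\<infinity>"])
    have "norm (F (exp x)) * exp x = norm (exp_pullback (Re s) f x)" for x
      using arg_cong[OF subst[of x], of norm] by (simp add: norm_mult mult.commute)
    then show "set_integrable lborel (einterval (- \<infinity>) \<infinity>) (\<lambda>x. norm (F (exp x)) * exp x)"
      using int by (simp add: set_integrable_def)
  qed (use ereal_exp_tendsto F_cont in \<open>auto intro!: derivative_eq_intros continuous_intros simp: zero_ereal_def\<close>)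
  have int_F: "set_integrable lborel {0<..} F"
    unfolding set_integrable_def
  proof (rule Bochner_Integration.integrable_bound[OF int_norm[unfolded set_integrable_def]])
    show "(\<lambda>x. indicat_real {0<..} x *\<^sub>R F x) \<in> borel_measurable lborel"
      using borel_measurable_continuous_on_indicator[OF _ continuous_at_imp_continuous_on, of "{0<..}" F] F_cont
      by simp
  qed (auto simp: indicator_def zero_ereal_def)
  then show "mellin_exists f s"
    unfolding mellin_exists_def F_def .
  have "(LBINT x=ereal 0..\<infinity>. F x) = (LBINT x=-\<infinity>..\<infinity>. exp x *\<^sub>R F (exp x))"
  proof (rule interval_integral_substitution_integrable[where g=exp and g'=exp])
    show "set_integrable lborel (einterval (- \<infinity>) \<infinity>) (\<lambda>x. exp x *\<^sub>R F (exp x))"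
      unfolding subst using integrable_mult_iexp[OF int] by (simp add: set_integrable_def)
    show "set_integrable lborel (einterval (ereal 0) \<infinity>) F"
      using int_F by simp
  qed (use ereal_exp_tendsto F_cont in \<open>auto intro!: derivative_eq_intros\<close>)
  moreover have "(LBINT x=ereal 0..\<infinity>. F x) = mellin f s"
    by (simp add: interval_lebesgue_integral_def mellin_def F_def)
  moreover have "(LBINT x=-\<infinity>..\<infinity>. exp x *\<^sub>R F (exp x)) = fourier_transform (exp_pullback (Re s) f) (Im s)"
    by (simp add: interval_lebesgue_integral_def fourier_transform_def set_lebesgue_integral_def subst)
  ultimately show "mellin f s = fourier_transform (exp_pullback (Re s) f) (Im s)"
    by simp
qed

section \<open>Mellin inversion for the class \<open>M\<^sub>\<alpha>\<^sub>,\<^sub>k\<close>\<close>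

lemma class_ME:
  assumes "class_M \<alpha> k f"
  obtains D where "\<And>x. x \<ge> 0 \<Longrightarrow> D 0 x = f x"
    and "\<And>j x. j < k \<Longrightarrow> x > 0 \<Longrightarrow> (D j has_vector_derivative D (Suc j) x) (at x)"
    and "\<And>j. j \<le> k \<Longrightarrow> continuous_on {0..} (D j)"
    and "\<And>j. j \<le> k \<Longrightarrow> (\<lambda>x. norm (D j x)) \<in> O(\<lambda>x. x powr (- \<alpha> - real j))"
proof -
  obtain D :: "nat \<Rightarrow> real \<Rightarrow> complex" where
    D0: "\<forall>x\<ge>0. D 0 x = f x" and
    der: "\<forall>j<k. \<forall>x\<ge>0. (D j has_vector_derivative D (Suc j) x) (at x within {0..})" and
    cont: "\<forall>j\<le>k. continuous_on {0..} (D j)" and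
    decay: "\<forall>j\<le>k. \<exists>C X. \<forall>x\<ge>X. norm (D j x) \<le> C * x powr (- \<alpha> - real j)"
    using assms unfolding class_M_def by blast
  show ?thesis
  proof (rule that)
    show "D 0 x = f x" if "x \<ge> 0" for x
      using D0 that by blast
    show "continuous_on {0..} (D j)" if "j \<le> k" for j
      using cont that by blast
    show "(D j has_vector_derivative D (Suc j) x) (at x)" if "j < k" "x > 0" for j x
    proof -
      have "at x within {0..} = at x"
        using that by (intro at_within_interior) auto
      then show ?thesis
        using der that by (metis less_imp_le)
    qed
    show "(\<lambda>x. norm (D j x)) \<in> O(\<lambda>x. x powr (- \<alpha> - real j))" if j: "j \<le> k" for j
    proof -
      obtain C X where "\<forall>x\<ge>X. norm (D j x) \<le> C * x powr (- \<alpha> - real j)"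
        using decay j by blast
      then show ?thesis
        by (intro bigoI[where c=C] eventually_at_top_linorderI[of X]) simp
    qed
  qed
qed

lemma continuous_on_class_M:
  assumes "class_M \<alpha> k f"
  shows "continuous_on {0..} f"
proof -
  obtain D where D0: "\<And>x. x \<ge> 0 \<Longrightarrow> D 0 x = f x"
    and "\<And>j x. j < k \<Longrightarrow> x > 0 \<Longrightarrow> (D j has_vector_derivative D (Suc j) x) (at x)"
    and cont: "\<And>j. j \<le> k \<Longrightarrow> continuous_on {0..} (D j)"
    and "\<And>j. j \<le> k \<Longrightarrow> (\<lambda>x. norm (D j x)) \<in> O(\<lambda>x. x powr (- \<alpha> - real j))"
    by (rule class_ME[OF assms]) blast
  show ?thesis
    by (rule continuous_on_eq[OF cont[of 0]]) (simp_all add: D0)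
qed

lemma bigo_norm_class_M:
  assumes "class_M \<alpha> k f"
  shows "(\<lambda>x. norm (f x)) \<in> O(\<lambda>x. x powr - \<alpha>)"
proof -
  obtain D where D0: "\<And>x. x \<ge> 0 \<Longrightarrow> D 0 x = f x"
    and "\<And>j x. j < k \<Longrightarrow> x > 0 \<Longrightarrow> (D j has_vector_derivative D (Suc j) x) (at x)"
    and "\<And>j. j \<le> k \<Longrightarrow> continuous_on {0..} (D j)"
    and decay: "\<And>j. j \<le> k \<Longrightarrow> (\<lambda>x. norm (D j x)) \<in> O(\<lambda>x. x powr (- \<alpha> - real j))"
    by (rule class_ME[OF assms]) blast
  have "(\<lambda>x. norm (D 0 x)) \<in> O(\<lambda>x. x powr - \<alpha>)"
    using decay[of 0] by simp
  moreover have "eventually (\<lambda>x. norm (D 0 x) = norm (f x)) at_top"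
    using D0 by (intro eventually_at_top_linorderI[of 0]) simp
  ultimately show ?thesis
    by (simp add: landau_o.big.in_cong)
qed

lemma
  assumes "class_M \<alpha> k f" "0 < Re s" "Re s < \<alpha>"
  shows mellin_exists_class_M: "mellin_exists f s"
    and mellin_eq_fourier_transform_class_M: "mellin f s = fourier_transform (exp_pullback (Re s) f) (Im s)"
proof -
  have "continuous_on {0<..} f"
    using continuous_on_class_M[OF assms(1)] by (rule continuous_on_subset) auto
  moreover have "integrable lborel (exp_pullback (Re s) f)"
    using continuous_on_class_M[OF assms(1)] bigo_norm_class_M[OF assms(1)] assms(2,3)
    by (rule integrable_exp_pullback)
  ultimately show "mellin_exists f s" "mellin f s = fourier_transform (exp_pullback (Re s) f) (Im s)"
    by (rule mellin_eq_fourier_transform)+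
qed

lemma norm_Complex_mult_ge:
  assumes "0 < \<sigma>"
  shows "min 1 (\<sigma>\<^sup>2) * (1 + t\<^sup>2) \<le> norm (Complex \<sigma> t) * norm (Complex (\<sigma> + 1) t)"
proof -
  have "norm (Complex \<sigma> t) \<le> norm (Complex (\<sigma> + 1) t)"
    using assms by (simp add: complex_norm power2_eq_square mult_mono)
  then have "norm (Complex \<sigma> t) * norm (Complex \<sigma> t) \<le> norm (Complex \<sigma> t) * norm (Complex (\<sigma> + 1) t)"
    by (simp add: mult_left_mono)
  moreover have "norm (Complex \<sigma> t) * norm (Complex \<sigma> t) = \<sigma>\<^sup>2 + t\<^sup>2"
    by (simp add: complex_norm)
  moreover have "min 1 (\<sigma>\<^sup>2) * (1 + t\<^sup>2) \<le> \<sigma>\<^sup>2 + t\<^sup>2"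
    by (auto simp: min_def distrib_left intro: mult_left_le_one_le)
  ultimately show ?thesis
    by linarith
qed

lemma fourier_transform_exp_pullback_class_M_bound:
  assumes f: "class_M \<alpha> k f" and k: "2 \<le> k" and \<sigma>: "0 < \<sigma>" "\<sigma> < \<alpha>"
  obtains N where "\<And>t. norm (fourier_transform (exp_pullback \<sigma> f) t) \<le> N / (1 + t\<^sup>2)"
proof -
  obtain D where D0: "\<And>x. x \<ge> 0 \<Longrightarrow> D 0 x = f x"
    and der: "\<And>j x. j < k \<Longrightarrow> x > 0 \<Longrightarrow> (D j has_vector_derivative D (Suc j) x) (at x)"
    and cont: "\<And>j. j \<le> k \<Longrightarrow> continuous_on {0..} (D j)"
    and decay: "\<And>j. j \<le> k \<Longrightarrow> (\<lambda>x. norm (D j x)) \<in> O(\<lambda>x. x powr (- \<alpha> - real j))"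
    by (rule class_ME[OF f]) blast
  have step: "fourier_transform (exp_pullback (\<sigma> + j + 1) (D (Suc j))) t
      = - Complex (\<sigma> + j) t * fourier_transform (exp_pullback (\<sigma> + j) (D j)) t" if j: "j < k" for j t
  proof (rule fourier_transform_exp_pullback_deriv)
    show "(D j has_vector_derivative D (Suc j) x) (at x)" if "x > 0" for x
      using der j that by blast
    show "continuous_on {0..} (D j)" "continuous_on {0..} (D (Suc j))"
      using cont j by auto
    show "(\<lambda>x. norm (D j x)) \<in> O(\<lambda>x. x powr - (\<alpha> + j))"
      using decay[of j] j by (simp add: algebra_simps)
    show "(\<lambda>x. norm (D (Suc j) x)) \<in> O(\<lambda>x. x powr (- (\<alpha> + j) - 1))"
      using decay[of "Suc j"] j by (simp add: algebra_simps)
  qed (use \<sigma> in auto)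
  have "exp_pullback \<sigma> f = exp_pullback \<sigma> (D 0)"
    by (simp add: exp_pullback_def D0 fun_eq_iff)
  then have FT2: "fourier_transform (exp_pullback (\<sigma> + 2) (D 2)) t
      = Complex \<sigma> t * Complex (\<sigma> + 1) t * fourier_transform (exp_pullback \<sigma> f) t" for t
    using step[of 0 t] step[of 1 t] k by (simp add: numeral_2_eq_2 add.assoc)
  define N where "N = (\<integral>u. norm (exp_pullback (\<sigma> + 2) (D 2) u) \<partial>lborel)"
  have "norm (fourier_transform (exp_pullback (\<sigma> + 2) (D 2)) t) \<le> N" for t
    unfolding fourier_transform_def N_def
    using integral_norm_bound[of lborel "\<lambda>u. exp_pullback (\<sigma> + 2) (D 2) u * iexp (t * u)"]
    by (simp add: norm_mult)
  then have "min 1 (\<sigma>\<^sup>2) * (1 + t\<^sup>2) * norm (fourier_transform (exp_pullback \<sigma> f) t) \<le> N" for t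
    using norm_Complex_mult_ge[OF \<sigma>(1), of t]
    by (auto simp: FT2 norm_mult intro: order_trans[OF mult_right_mono])
  then have "norm (fourier_transform (exp_pullback \<sigma> f) t) \<le> N / min 1 (\<sigma>\<^sup>2) / (1 + t\<^sup>2)" for t
    using \<sigma> by (simp add: field_simps add_pos_nonneg)
  then show ?thesis
    using that by blast
qed

lemma integrable_mellin_class_M:
  assumes f: "class_M \<alpha> k f" and k: "2 \<le> k" and \<sigma>: "0 < \<sigma>" "\<sigma> < \<alpha>"
  shows "integrable lborel (\<lambda>t. mellin f (Complex \<sigma> t))"
proof -
  obtain N where N: "\<And>t. norm (fourier_transform (exp_pullback \<sigma> f) t) \<le> N / (1 + t\<^sup>2)"
    by (rule fourier_transform_exp_pullback_class_M_bound[OF assms]) blast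
  have "continuous_on UNIV (exp_pullback \<sigma> f)"
    by (intro continuous_on_exp_pullback continuous_on_subset[OF continuous_on_class_M[OF f]]) auto
  then have [measurable]: "exp_pullback \<sigma> f \<in> borel_measurable borel"
    by (rule borel_measurable_continuous_onI)
  have "integrable lborel (\<lambda>t. N * inverse (1 + t\<^sup>2))"
    using integrable_inverse_1_plus_square
    by (intro Bochner_Integration.integrable_mult_right) (simp add: set_integrable_def)
  then have "integrable lborel (fourier_transform (exp_pullback \<sigma> f))"
  proof (rule Bochner_Integration.integrable_bound)
    show "fourier_transform (exp_pullback \<sigma> f) \<in> borel_measurable lborel"
      unfolding fourier_transform_def[abs_def] by measurable
    show "AE t in lborel. norm (fourier_transform (exp_pullback \<sigma> f) t) \<le> norm (N * inverse (1 + t\<^sup>2))"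
      using N by (intro AE_I2) (metis abs_ge_self divide_inverse order_trans real_norm_def)
  qed
  moreover have "mellin f (Complex \<sigma> t) = fourier_transform (exp_pullback \<sigma> f) t" for t
    using mellin_eq_fourier_transform_class_M[OF f, of "Complex \<sigma> t"] \<sigma> by simp
  ultimately show ?thesis
    by simp
qed

theorem mellin_inversion:
  fixes f :: "real \<Rightarrow> complex"
  assumes f: "class_M \<alpha> k f" and k: "2 \<le> k" and \<sigma>: "0 < \<sigma>" "\<sigma> < \<alpha>" and y: "y > 0"
  shows "(\<integral>t. mellin f (Complex \<sigma> t) * of_real y powr (- Complex \<sigma> t) \<partial>lborel) = 2 * pi * f y"
proof -
  define g where "g = exp_pullback \<sigma> f"
  have mellin_eq: "mellin f (Complex \<sigma> t) = fourier_transform g t" for t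
    using mellin_eq_fourier_transform_class_M[OF f, of "Complex \<sigma> t"] \<sigma> by (simp add: g_def)
  have cont: "continuous_on {0..} f" and decay: "(\<lambda>x. norm (f x)) \<in> O(\<lambda>x. x powr - \<alpha>)"
    using continuous_on_class_M[OF f] bigo_norm_class_M[OF f] .
  obtain B where B: "\<And>u. norm (g u) \<le> B"
    using exp_pullback_bounded[OF cont decay \<sigma>] unfolding g_def by blast
  have "continuous_on UNIV g"
    unfolding g_def by (intro continuous_on_exp_pullback continuous_on_subset[OF cont]) auto
  then have "isCont g (ln y)"
    by (simp add: continuous_on_eq_continuous_at)
  moreover have "integrable lborel (fourier_transform g)"
    using integrable_mellin_class_M[OF f k \<sigma>] by (simp add: mellin_eq)
  ultimately have inv: "(\<integral>t. fourier_transform g t * iexp (- (t * ln y)) \<partial>lborel) = 2 * pi * g (ln y)"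
    using fourier_inversion[OF integrable_exp_pullback[OF cont decay \<sigma>] B[unfolded g_def]]
    by (simp add: g_def)
  have "of_real y powr (- Complex \<sigma> t) = of_real (y powr - \<sigma>) * iexp (- (t * ln y))" for t
  proof -
    have "of_real y powr (- Complex \<sigma> t) = exp (- Complex \<sigma> t * of_real (ln y))"
      using y by (simp add: powr_def Ln_of_real)
    also have "- Complex \<sigma> t * of_real (ln y) = of_real (- \<sigma> * ln y) + \<i> * of_real (- (t * ln y))"
      by (simp add: complex_eq_iff)
    also have "exp \<dots> = of_real (exp (- \<sigma> * ln y)) * iexp (- (t * ln y))"
      by (simp only: exp_add exp_of_real)
    also have "exp (- \<sigma> * ln y) = y powr - \<sigma>"
      using y by (simp add: powr_def)
    finally show ?thesis .
  qed
  then have "(\<integral>t. mellin f (Complex \<sigma> t) * of_real y powr (- Complex \<sigma> t) \<partial>lborel)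
      = of_real (y powr - \<sigma>) * (\<integral>t. fourier_transform g t * iexp (- (t * ln y)) \<partial>lborel)"
    by (simp add: mellin_eq mult_ac flip: integral_mult_right_zero)
  also have "\<dots> = of_real (y powr - \<sigma>) * (2 * pi * g (ln y))"
    by (simp only: inv)
  also have "\<dots> = 2 * pi * f y"
    using y by (simp add: g_def exp_pullback_def powr_def exp_minus field_simps)
  finally show ?thesis .
qed

section \<open>Dirichlet series\<close>

lemma norm_dirichlet_term:
  "norm (c / of_nat (Suc n) powr s) = norm c / real (Suc n) powr Re s"
  using norm_powr_real_powr[of "of_nat (Suc n)" s] by (simp add: norm_divide)

lemma norm_dirichlet_series_le:
  assumes "summable (\<lambda>n. norm (\<phi> (Suc n)) / real (Suc n) powr Re s)"
  shows "norm (dirichlet_series \<phi> s) \<le> (\<Sum>n. norm (\<phi> (Suc n)) / real (Suc n) powr Re s)"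
  using summable_norm[of "\<lambda>n. \<phi> (Suc n) / of_nat (Suc n) powr s"] assms
  unfolding dirichlet_series_def norm_dirichlet_term by blast

lemma sums_dirichlet_series:
  assumes "summable (\<lambda>n. norm (\<phi> (Suc n)) / real (Suc n) powr Re s)"
  shows "(\<lambda>n. \<phi> (Suc n) / of_nat (Suc n) powr s) sums dirichlet_series \<phi> s"
  unfolding dirichlet_series_def
  by (rule summable_sums, rule summable_norm_cancel) (use assms in \<open>simp only: norm_dirichlet_term\<close>)

lemma borel_measurable_powr_Complex:
  assumes "y > 0"
  shows "(\<lambda>t. of_real y powr (w * Complex \<sigma> t)) \<in> borel_measurable borel"
proof -
  have "(\<lambda>t. of_real y powr (w * Complex \<sigma> t)) = (\<lambda>t. exp (w * (of_real \<sigma> + \<i> * of_real t) * of_real (ln y)))"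
    using assms by (simp add: powr_def Ln_of_real Complex_eq)
  also have "\<dots> \<in> borel_measurable borel"
    by measurable
  finally show ?thesis .
qed

lemma borel_measurable_dirichlet_series_Complex:
  assumes "summable (\<lambda>n. norm (\<phi> (Suc n)) / real (Suc n) powr \<sigma>)"
  shows "(\<lambda>t. dirichlet_series \<phi> (Complex \<sigma> t)) \<in> borel_measurable borel"
proof (rule borel_measurable_LIMSEQ_metric)
  show "(\<lambda>t. \<Sum>i<n. \<phi> (Suc i) / of_nat (Suc i) powr Complex \<sigma> t) \<in> borel_measurable borel" for n
  proof -
    have "(\<lambda>t. of_real (real (Suc i)) powr (1 * Complex \<sigma> t)) \<in> borel_measurable borel" for i
      by (rule borel_measurable_powr_Complex) simp
    then have "(\<lambda>t. \<phi> (Suc i) / of_nat (Suc i) powr Complex \<sigma> t) \<in> borel_measurable borel" for i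
      by (simp del: of_nat_Suc)
    then show ?thesis
      by measurable
  qed
  show "(\<lambda>n. \<Sum>i<n. \<phi> (Suc i) / of_nat (Suc i) powr Complex \<sigma> t) \<longlonglongrightarrow> dirichlet_series \<phi> (Complex \<sigma> t)" for t
    using sums_dirichlet_series[of \<phi> "Complex \<sigma> t"] assms by (simp add: sums_def)
qed

lemma integrable_mult_powr_Complex:
  assumes "integrable lborel M" "y > 0"
  shows "integrable lborel (\<lambda>t. M t * of_real y powr (- Complex \<sigma> t))"
proof (rule Bochner_Integration.integrable_bound)
  show "integrable lborel (\<lambda>t. y powr - \<sigma> * norm (M t))"
    using assms(1) by (intro Bochner_Integration.integrable_mult_right integrable_norm)
  have [measurable]: "M \<in> borel_measurable borel"
    "(\<lambda>t. of_real y powr (- Complex \<sigma> t)) \<in> borel_measurable borel"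
    using assms borel_measurable_powr_Complex[OF assms(2), of "- 1"] by auto
  show "(\<lambda>t. M t * of_real y powr (- Complex \<sigma> t)) \<in> borel_measurable lborel"
    by simp
  show "AE t in lborel. norm (M t * of_real y powr (- Complex \<sigma> t)) \<le> norm (y powr - \<sigma> * norm (M t))"
    using assms(2) by (intro AE_I2) (simp add: norm_mult norm_powr_real_powr)
qed

lemma integrable_dirichlet_series_mult:
  assumes int: "integrable lborel M"
    and summ: "summable (\<lambda>n. norm (\<phi> (Suc n)) / real (Suc n) powr \<sigma>)"
  shows "integrable lborel (\<lambda>t. dirichlet_series \<phi> (Complex \<sigma> t) * M t)"
proof (rule Bochner_Integration.integrable_bound)
  define S where "S = (\<Sum>n. norm (\<phi> (Suc n)) / real (Suc n) powr \<sigma>)"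
  show "integrable lborel (\<lambda>t. S * norm (M t))"
    using int by (intro Bochner_Integration.integrable_mult_right integrable_norm)
  have [measurable]: "M \<in> borel_measurable borel"
    "(\<lambda>t. dirichlet_series \<phi> (Complex \<sigma> t)) \<in> borel_measurable borel"
    using int borel_measurable_dirichlet_series_Complex[OF summ] by auto
  show "(\<lambda>t. dirichlet_series \<phi> (Complex \<sigma> t) * M t) \<in> borel_measurable lborel"
    by simp
  have bound: "norm (dirichlet_series \<phi> (Complex \<sigma> t)) \<le> S" for t
    using norm_dirichlet_series_le[of \<phi> "Complex \<sigma> t"] summ by (simp add: S_def)
  then have "S \<ge> 0"
    by (rule order_trans[OF norm_ge_zero])
  then show "AE t in lborel. norm (dirichlet_series \<phi> (Complex \<sigma> t) * M t) \<le> norm (S * norm (M t))"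
    by (intro AE_I2) (simp add: norm_mult abs_mult mult_right_mono bound)
qed

lemma dirichlet_sum_sums_mellin_inversion:
  fixes f :: "real \<Rightarrow> complex"
  assumes int: "integrable lborel M"
    and inv: "\<And>y. y > 0 \<Longrightarrow> (\<integral>t. M t * of_real y powr (- Complex \<sigma> t) \<partial>lborel) = 2 * pi * f y"
    and summ: "summable (\<lambda>n. norm (\<phi> (Suc n)) / real (Suc n) powr \<sigma>)"
    and x: "x > 0"
  shows "(\<lambda>n. \<phi> (Suc n) * f (real (Suc n) * x)) sums
           (1 / (2 * of_real pi * \<i>) *
             (LINT t|lborel. dirichlet_series \<phi> (Complex \<sigma> t) * M t * of_real x powr (- Complex \<sigma> t) * \<i>))"
proof -
  define g where "g n t = \<phi> (Suc n) / of_nat (Suc n) powr Complex \<sigma> t * M t * of_real x powr (- Complex \<sigma> t) * \<i>"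
    for n t
  have g_eq: "g n t = (\<i> * \<phi> (Suc n)) * (M t * of_real (real (Suc n) * x) powr (- Complex \<sigma> t))" for n t
    using powr_times_real[of "of_nat (Suc n)" "of_real x" "- Complex \<sigma> t"] x
    by (simp add: g_def powr_minus_divide mult_ac del: of_nat_Suc)
  have g_norm: "norm (g n t) = norm (\<phi> (Suc n)) / real (Suc n) powr \<sigma> * (norm (M t) * x powr - \<sigma>)" for n t
    using x by (simp add: g_def norm_mult norm_dirichlet_term norm_powr_real_powr del: of_nat_Suc)
  have "(\<lambda>n. \<integral>t. g n t \<partial>lborel) sums (\<integral>t. (\<Sum>n. g n t) \<partial>lborel)"
  proof (rule sums_integral)
    show "integrable lborel (g n)" for n
      unfolding g_eq[abs_def] using x
      by (intro Bochner_Integration.integrable_mult_right integrable_mult_powr_Complex int) simp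
    show "AE t in lborel. summable (\<lambda>n. norm (g n t))"
      unfolding g_norm by (intro AE_I2 summable_mult2 summ)
    show "summable (\<lambda>n. \<integral>t. norm (g n t) \<partial>lborel)"
      unfolding g_norm integral_mult_right_zero by (intro summable_mult2 summ)
  qed
  moreover have "(\<integral>t. g n t \<partial>lborel) = (\<i> * \<phi> (Suc n)) * (2 * pi * f (real (Suc n) * x))" for n
    using inv[of "real (Suc n) * x"] x by (simp add: g_eq del: of_nat_Suc)
  moreover have "(\<Sum>n. g n t) = dirichlet_series \<phi> (Complex \<sigma> t) * M t * of_real x powr (- Complex \<sigma> t) * \<i>" for t
    using sums_mult2[OF sums_dirichlet_series[of \<phi> "Complex \<sigma> t"], of "M t * of_real x powr (- Complex \<sigma> t) * \<i>"] summ
    unfolding g_def by (simp add: sums_iff mult.assoc)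
  ultimately have "(\<lambda>n. (\<i> * \<phi> (Suc n)) * (2 * pi * f (real (Suc n) * x))) sums
      (LINT t|lborel. dirichlet_series \<phi> (Complex \<sigma> t) * M t * of_real x powr (- Complex \<sigma> t) * \<i>)"
    by simp
  from sums_mult[OF this, of "1 / (2 * of_real pi * \<i>)"] show ?thesis
    by (simp add: field_simps)
qed

lemma summable_norm_mult_dilates:
  fixes f :: "real \<Rightarrow> complex" and \<phi> :: "nat \<Rightarrow> complex"
  assumes decay: "(\<lambda>x. norm (f x)) \<in> O(\<lambda>x. x powr - \<beta>)"
    and summ: "summable (\<lambda>n. norm (\<phi> (Suc n)) / real (Suc n) powr \<beta>)" and x: "x > 0"
  shows "summable (\<lambda>n. norm (\<phi> (Suc n) * f (real (Suc n) * x)))"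
proof -
  obtain C where "C > 0" and "eventually (\<lambda>y. norm (f y) \<le> C * y powr - \<beta>) at_top"
    using decay by (elim landau_o.bigE) simp
  then obtain X where tail: "\<And>y. y \<ge> X \<Longrightarrow> norm (f y) \<le> C * y powr - \<beta>"
    by (auto simp: eventually_at_top_linorder)
  show ?thesis
  proof (rule summable_comparison_test')
    show "summable (\<lambda>n. C * x powr - \<beta> * (norm (\<phi> (Suc n)) / real (Suc n) powr \<beta>))"
      using summ by (rule summable_mult)
    fix n assume "nat \<lceil>X / x\<rceil> \<le> n"
    then have "X \<le> real (Suc n) * x"
      using x by (simp add: field_simps)
    then have "norm (f (real (Suc n) * x)) \<le> C * (real (Suc n) * x) powr - \<beta>"
      by (rule tail)
    also have "\<dots> = C * x powr - \<beta> / real (Suc n) powr \<beta>"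
      using x by (simp add: powr_mult powr_minus_divide del: of_nat_Suc)
    finally have bound: "norm (f (real (Suc n) * x)) \<le> C * x powr - \<beta> / real (Suc n) powr \<beta>" .
    show "norm (norm (\<phi> (Suc n) * f (real (Suc n) * x)))
        \<le> C * x powr - \<beta> * (norm (\<phi> (Suc n)) / real (Suc n) powr \<beta>)"
      using mult_left_mono[OF bound norm_ge_zero[of "\<phi> (Suc n)"]]
      by (simp add: norm_mult mult_ac del: of_nat_Suc)
  qed
qed

lemma integral_suminf_dilates:
  fixes F :: "real \<Rightarrow> complex" and a :: "nat \<Rightarrow> complex"
  assumes F: "integrable lborel F"
    and summ: "summable (\<lambda>n. norm (a n) / real (Suc n))"
    and pointwise: "AE x in lborel. summable (\<lambda>n. norm (a n * F (real (Suc n) * x)))"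
  shows "integrable lborel (\<lambda>x. \<Sum>n. a n * F (real (Suc n) * x))"
    and "(\<integral>x. (\<Sum>n. a n * F (real (Suc n) * x)) \<partial>lborel) = (\<Sum>n. a n / real (Suc n)) * (\<integral>x. F x \<partial>lborel)"
proof -
  have dilate: "(\<integral>x. H (real (Suc n) * x) \<partial>lborel) = inverse (real (Suc n)) *\<^sub>R (\<integral>y. H y \<partial>lborel)"
    for H :: "real \<Rightarrow> 'b::{banach, second_countable_topology}" and n
    using lborel_integral_real_affine[of "real (Suc n)" H 0] by (simp del: of_nat_Suc)
  have int_dilate: "integrable lborel (\<lambda>x. a n * F (real (Suc n) * x))" for n
    using lborel_integrable_real_affine[OF F, of "real (Suc n)" 0]
    by (intro Bochner_Integration.integrable_mult_right) simp
  have norm_int: "(\<integral>x. norm (a n * F (real (Suc n) * x)) \<partial>lborel)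
      = norm (a n) / real (Suc n) * (\<integral>x. norm (F x) \<partial>lborel)" for n
    using dilate[of "\<lambda>x. norm (F x)" n] by (simp add: norm_mult divide_inverse del: of_nat_Suc)
  have summ_int: "summable (\<lambda>n. \<integral>x. norm (a n * F (real (Suc n) * x)) \<partial>lborel)"
    unfolding norm_int by (intro summable_mult2 summ)
  show "integrable lborel (\<lambda>x. \<Sum>n. a n * F (real (Suc n) * x))"
    by (rule integrable_suminf[OF int_dilate pointwise summ_int])
  have "(\<integral>x. (\<Sum>n. a n * F (real (Suc n) * x)) \<partial>lborel) = (\<Sum>n. \<integral>x. a n * F (real (Suc n) * x) \<partial>lborel)"
    by (rule integral_suminf[OF int_dilate pointwise summ_int])
  also have "\<dots> = (\<Sum>n. a n / real (Suc n) * (\<integral>x. F x \<partial>lborel))"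
    using dilate[of F]
    by (simp add: integral_mult_right_zero scaleR_conv_of_real divide_inverse mult.assoc del: of_nat_Suc)
  also have "\<dots> = (\<Sum>n. a n / real (Suc n)) * (\<integral>x. F x \<partial>lborel)"
    by (rule suminf_mult2[symmetric], rule summable_norm_cancel) (use summ in \<open>simp add: norm_divide del: of_nat_Suc\<close>)
  finally show "(\<integral>x. (\<Sum>n. a n * F (real (Suc n) * x)) \<partial>lborel) = (\<Sum>n. a n / real (Suc n)) * (\<integral>x. F x \<partial>lborel)" .
qed

lemma of_real_powr_dilate:
  assumes "c > 0" "x > 0"
  shows "of_real c powr (1 - s) * of_real (c * x) powr (s - 1) = (of_real x powr (s - 1) :: complex)"
  using powr_times_real[of "of_real c" "of_real x" "s - 1"] assms
  by (simp add: powr_add[symmetric])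

lemma
  fixes c s :: complex
  shows norm_dilation_coefficient:
      "norm (c * of_nat (Suc n) powr (1 - s)) / real (Suc n) = norm c / real (Suc n) powr Re s"
    and dilation_coefficient_div:
      "c * of_nat (Suc n) powr (1 - s) / of_real (real (Suc n)) = c / of_nat (Suc n) powr s"
proof -
  have "norm (of_nat (Suc n) powr (1 - s) :: complex) = real (Suc n) powr (1 - Re s)"
    using norm_powr_real_powr[of "of_nat (Suc n)" "1 - s"] by (simp del: of_nat_Suc)
  then have "norm (c * of_nat (Suc n) powr (1 - s)) = norm c * (real (Suc n) / real (Suc n) powr Re s)"
    by (simp only: norm_mult powr_diff) simp
  then show "norm (c * of_nat (Suc n) powr (1 - s)) / real (Suc n) = norm c / real (Suc n) powr Re s"
    by (simp del: of_nat_Suc)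
  show "c * of_nat (Suc n) powr (1 - s) / of_real (real (Suc n)) = c / of_nat (Suc n) powr s"
    by (simp add: powr_diff del: of_nat_Suc)
qed

lemma mellin_dirichlet_sum:
  fixes f :: "real \<Rightarrow> complex"
  assumes mellin_f: "mellin_exists f s"
    and summ: "summable (\<lambda>n. norm (\<phi> (Suc n)) / real (Suc n) powr Re s)"
    and pointwise: "\<And>x. x > 0 \<Longrightarrow> summable (\<lambda>n. norm (\<phi> (Suc n) * f (real (Suc n) * x)))"
  shows "mellin_exists (\<lambda>x. \<Sum>n. \<phi> (Suc n) * f (real (Suc n) * x)) s"
    and "mellin (\<lambda>x. \<Sum>n. \<phi> (Suc n) * f (real (Suc n) * x)) s = dirichlet_series \<phi> s * mellin f s"
proof -
  define F where "F x = indicator {0<..} x *\<^sub>R (of_real x powr (s - 1) * f x)" for x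
  define a where "a n = \<phi> (Suc n) * of_nat (Suc n) powr (1 - s)" for n
  have dilate: "of_real x powr (s - 1) * (\<phi> (Suc n) * f (real (Suc n) * x)) = a n * F (real (Suc n) * x)"
    if "x > 0" for x n
    using of_real_powr_dilate[of "real (Suc n)" x s] that
    by (simp add: a_def F_def mult_ac del: of_nat_Suc)
  have integrand: "indicator {0<..} x *\<^sub>R (of_real x powr (s - 1) * (\<Sum>n. \<phi> (Suc n) * f (real (Suc n) * x)))
      = (\<Sum>n. a n * F (real (Suc n) * x))" for x
  proof (cases "x > 0")
    case True
    then have "indicator {0<..} x *\<^sub>R (of_real x powr (s - 1) * (\<Sum>n. \<phi> (Suc n) * f (real (Suc n) * x)))
        = (\<Sum>n. of_real x powr (s - 1) * (\<phi> (Suc n) * f (real (Suc n) * x)))"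
      using suminf_mult[OF summable_norm_cancel[OF pointwise[OF True]]] by simp
    then show ?thesis
      by (simp only: dilate[OF True])
  next
    case False
    then have "F (real (Suc n) * x) = 0" for n
      by (simp add: F_def zero_less_mult_iff del: of_nat_Suc)
    then show ?thesis
      using False by simp
  qed
  have pointwise': "summable (\<lambda>n. norm (a n * F (real (Suc n) * x)))" for x
  proof (cases "x > 0")
    case True
    have "norm (a n * F (real (Suc n) * x))
        = norm (of_real x powr (s - 1)) * norm (\<phi> (Suc n) * f (real (Suc n) * x))" for n
      by (simp only: dilate[OF True, symmetric] norm_mult)
    then show ?thesis
      by (simp only: summable_mult[OF pointwise[OF True]])
  next
    case False
    then show ?thesis
      by (simp add: F_def zero_less_mult_iff del: of_nat_Suc)
  qed
  have int_F: "integrable lborel F"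
    using mellin_f unfolding mellin_exists_def set_integrable_def F_def[abs_def] .
  note dilates = integral_suminf_dilates[OF int_F, of a]
  have summ_a: "summable (\<lambda>n. norm (a n) / real (Suc n))"
    using summ by (simp only: a_def norm_dilation_coefficient)
  show "mellin_exists (\<lambda>x. \<Sum>n. \<phi> (Suc n) * f (real (Suc n) * x)) s"
    unfolding mellin_exists_def set_integrable_def integrand
    using dilates(1)[OF summ_a] pointwise' by simp
  have "mellin (\<lambda>x. \<Sum>n. \<phi> (Suc n) * f (real (Suc n) * x)) s = (\<integral>x. (\<Sum>n. a n * F (real (Suc n) * x)) \<partial>lborel)"
    unfolding mellin_def set_lebesgue_integral_def integrand ..
  also have "\<dots> = (\<Sum>n. a n / real (Suc n)) * (\<integral>x. F x \<partial>lborel)"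
    using dilates(2)[OF summ_a] pointwise' by simp
  also have "(\<Sum>n. a n / real (Suc n)) = dirichlet_series \<phi> s"
    by (simp only: a_def dilation_coefficient_div dirichlet_series_def)
  also have "(\<integral>x. F x \<partial>lborel) = mellin f s"
    unfolding mellin_def set_lebesgue_integral_def F_def ..
  finally show "mellin (\<lambda>x. \<Sum>n. \<phi> (Suc n) * f (real (Suc n) * x)) s = dirichlet_series \<phi> s * mellin f s" .
qed

theorem theorem2:
  fixes \<alpha> :: real and k :: nat and f :: "real \<Rightarrow> complex" and \<phi> :: "nat \<Rightarrow> complex"
  assumes "\<alpha> > 1" and "k \<ge> 2" and "class_M \<alpha> k f"
    and "\<forall>s. Re s > 1 \<longrightarrow> summable (\<lambda>n. norm (\<phi> (Suc n) / of_nat (Suc n) powr s))"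
  shows "(\<forall>\<sigma>. 1 < \<sigma> \<and> \<sigma> < \<alpha> \<longrightarrow>
            integrable lborel (\<lambda>t. dirichlet_series \<phi> (Complex \<sigma> t) * mellin f (Complex \<sigma> t)) \<and>
            (\<forall>x>0. (\<lambda>n. \<phi> (Suc n) * f (real (Suc n) * x)) sums
               (1 / (2 * of_real pi * \<i>) *
                 (LINT t|lborel. dirichlet_series \<phi> (Complex \<sigma> t) * mellin f (Complex \<sigma> t)
                                  * of_real x powr (- Complex \<sigma> t) * \<i>))))
       \<and> (\<forall>s. 1 < Re s \<and> Re s < \<alpha> \<longrightarrow>
            mellin_exists (\<lambda>x. \<Sum>n. \<phi> (Suc n) * f (real (Suc n) * x)) s \<and>
            mellin (\<lambda>x. \<Sum>n. \<phi> (Suc n) * f (real (Suc n) * x)) s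
              = dirichlet_series \<phi> s * mellin f s)"
proof -
  note f = assms(3) and k = assms(2)
  have summ: "summable (\<lambda>n. norm (\<phi> (Suc n)) / real (Suc n) powr \<sigma>)" if "\<sigma> > 1" for \<sigma>
    using assms(4)[rule_format, of "of_real \<sigma>"] that by (simp only: norm_dirichlet_term) simp
  have mellin_line: "integrable lborel (\<lambda>t. mellin f (Complex \<sigma> t))" if "1 < \<sigma>" "\<sigma> < \<alpha>" for \<sigma>
    using integrable_mellin_class_M[OF f k] that by simp
  have pointwise: "summable (\<lambda>n. norm (\<phi> (Suc n) * f (real (Suc n) * x)))" if "x > 0" for x
    by (rule summable_norm_mult_dilates[OF bigo_norm_class_M[OF f] summ[OF assms(1)] that])
  show ?thesis
    by (intro conjI allI impI; elim conjE;
        intro integrable_dirichlet_series_mult dirichlet_sum_sums_mellin_inversion mellin_dirichlet_sum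
          mellin_line summ mellin_inversion[OF f k] pointwise mellin_exists_class_M[OF f]; simp)
qed

end
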